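(* Let $H \subset L$ be a commutative field extension, let $\alpha \in L$ and set $M = H(\alpha)$. Then, for all positive integers $r,s \le \dim_H M$, we have $\mu_{H,M}(r,s) \le r+s-1$.
   Context: For $H$-subspaces $A,B$ of $M$, $\langle AB\rangle$ denotes the $H$-subspace of $M$ spanned by the product set $AB=\{ab \mid a\in A, b\in B\}$. For positive integers $r,s \le \dim_H M$, $\mu_{H,M}(r,s)$ is the minimum of $\dim_H \langle AB\rangle$ over all $H$-subspaces $A,B$ of $M$ with $\dim_H A = r$ and $\dim_H B = s$. *)

theory Defs
  imports "HOL-Algebra.Algebra"
begin

text \<open>The H-subspace of the ambient field L spanned by a set S: the smallest
  H-subspace (subalgebra in the sense of Embedded_Algebras) of L containing S.\<close>
definition hspan :: "('a, 'b) ring_scheme \<Rightarrow> 'a set \<Rightarrow> 'a set \<Rightarrow> 'a set" where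
  "hspan L H S = \<Inter> {V. subalgebra H V L \<and> S \<subseteq> V}"

definition hsubspace_dim :: "('a, 'b) ring_scheme \<Rightarrow> 'a set \<Rightarrow> 'a set \<Rightarrow> nat \<Rightarrow> 'a set \<Rightarrow> bool" where
  "hsubspace_dim L H M r A \<longleftrightarrow> subalgebra H A L \<and> A \<subseteq> M \<and> ring.dimension L r H A"

definition mu :: "('a, 'b) ring_scheme \<Rightarrow> 'a set \<Rightarrow> 'a set \<Rightarrow> nat \<Rightarrow> nat \<Rightarrow> nat" where
  "mu L H M r s = Inf {ring.dim L H (hspan L H (A <#>\<^bsub>L\<^esub> B)) | A B.
      hsubspace_dim L H M r A \<and> hsubspace_dim L H M s B}"

text \<open>r \<le> dim_H M, where dim_H M may be infinite.\<close>
definition le_hdim :: "('a, 'b) ring_scheme \<Rightarrow> 'a set \<Rightarrow> nat \<Rightarrow> 'a set \<Rightarrow> bool" where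
  "le_hdim L H r M \<longleftrightarrow> \<not> ring.finite_dimension L H M \<or> r \<le> ring.dim L H M"

end

theory Submission
  imports Defs
begin

text \<open>For \<open>r \<le> [H(\<alpha>) : H]\<close> the powers \<open>1, \<alpha>, \<dots>, \<alpha>^(r-1)\<close> are \<open>H\<close>-independent, so
  \<open>A = span(1, \<dots>, \<alpha>^(r-1))\<close> and \<open>B = span(1, \<dots>, \<alpha>^(s-1))\<close> have dimensions \<open>r\<close> and \<open>s\<close>.
  Their products are polynomials in \<open>\<alpha>\<close> of degree below \<open>r + s - 1\<close>, and conversely every
  \<open>\<alpha>^k\<close> with \<open>k < r + s - 1\<close> is a product \<open>\<alpha>^i \<alpha>^j\<close> with \<open>i < r\<close>, \<open>j < s\<close>. Hence
  \<open>\<langle>AB\<rangle> = span(1, \<dots>, \<alpha>^(r+s-2))\<close>, whose dimension is at most \<open>r + s - 1\<close>.\<close>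

lemma (in ring) subring_is_subalgebra:
  assumes "subring M R" and "K \<subseteq> M"
  shows "subalgebra K M R"
  using subring.axioms(1)[OF assms(1)] subringE(6)[OF assms(1)] assms(2)
  unfolding subalgebra_def subalgebra_axioms_def additive_subgroup_def by blast

lemma (in ring) exp_base_subset_subring:
  assumes "subring M R" and "x \<in> M"
  shows "set (exp_base x n) \<subseteq> M"
proof -
  have "x [^] k \<in> M" for k :: nat
    by (induct k) (use subringE(3,6)[OF assms(1)] assms(2) in auto)
  thus ?thesis unfolding exp_base_def by auto
qed

lemma (in ring) dim_Span_le_length:
  assumes K: "subfield K R" and Us: "set Us \<subseteq> carrier R"
  shows "(dim over K) (Span K Us) \<le> length Us"
proof -
  have "\<exists>Vs. independent K Vs \<and> length Vs \<le> length Us \<and> Span K Vs = Span K Us"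
    using Us
  proof (induction Us)
    case Nil thus ?case by auto
  next
    case (Cons u Us)
    then obtain Vs where Vs: "independent K Vs" "length Vs \<le> length Us" "Span K Vs = Span K Us"
      by auto
    have Usc: "set Us \<subseteq> carrier R" and uc: "u \<in> carrier R" using Cons.prems by auto
    show ?case
    proof (cases "u \<in> Span K Us")
      case True
      have "Span K (u # Us) = Span K Us"
        using mono_Span_subset[OF K, of "u # Us" Us] Span_base_incl[OF K Usc] mono_Span[OF K Usc uc]
          True Usc uc by auto
      thus ?thesis using Vs by (intro exI[of _ Vs]) simp
    next
      case False
      hence "independent K (u # Vs)" and "Span K (u # Vs) = Span K (u # Us)"
        using independent.li_Cons[of u K Vs] uc Vs by auto
      thus ?thesis using Vs(2) by (intro exI[of _ "u # Vs"]) simp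
    qed
  qed
  then obtain Vs where "independent K Vs" "length Vs \<le> length Us" "Span K Vs = Span K Us"
    by blast
  thus ?thesis using dimI[OF K dimension_independent] by (metis over_def)
qed

lemma (in ring) hspan_eq_Span:
  assumes "subfield K R" and "set Us \<subseteq> carrier R" and "set Us \<subseteq> S" and "S \<subseteq> Span K Us"
  shows "hspan R K S = Span K Us"
  unfolding hspan_def
  using Span_is_subalgebra[OF assms(1,2)] subalgebra_Span_incl[OF assms(1)] assms(3,4) by blast

lemma (in domain) transcendental_exp_base_independent:
  assumes "subfield K R" "x \<in> carrier R" "(transcendental over K) x"
  shows "independent K (exp_base x n)"
proof (induct n)
  case 0 show ?case by (simp add: exp_base_def)
next
  case (Suc n)
  have "x [^] n \<notin> Span K (exp_base x n)"
  proof
    assume "x [^] n \<in> Span K (exp_base x n)"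
    then obtain a Ks where Ks: "a \<in> K - {\<zero>}" "set Ks \<subseteq> K" "length Ks = n"
        "combine (a # Ks) (exp_base x (Suc n)) = \<zero>"
      using Span_mem_imp_non_trivial_combine[OF assms(1) exp_base_closed[OF assms(2), of n]]
      by (auto simp add: exp_base_def)
    hence "eval (a # Ks) x = eval [] x"
      using combine_eq_eval by (auto simp add: exp_base_def)
    moreover have "a # Ks \<in> carrier (K[X])" and "[] \<in> carrier (K[X])"
      unfolding univ_poly_def polynomial_def using Ks(1,2) by auto
    ultimately show False
      using assms(3) unfolding over_def transcendental_def inj_on_def by blast
  qed
  thus ?case
    using independent.li_Cons assms(2) Suc by (auto simp add: exp_base_def)
qed

lemma (in field) generate_field_eq_simple_extension:
  assumes K: "subfield K R" and x: "x \<in> carrier R" and "(algebraic over K) x"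
  shows "generate_field R (insert x K) = simple_extension K x"
proof
  have xK: "insert x K \<subseteq> carrier R" using subfieldE(3)[OF K] x by auto
  show "generate_field R (insert x K) \<subseteq> simple_extension K x"
    using generate_field_min_subfield1[OF xK] simple_extension_is_subfield[OF K x] assms(3)
      simple_extension_incl[OF subfieldE(3)[OF K] x] simple_extension_mem[OF subfieldE(1)[OF K] x]
    by (simp add: over_def)
  have "subfield (generate_field R (insert x K)) R"
    using generate_field_is_subfield[OF xK] .
  thus "simple_extension K x \<subseteq> generate_field R (insert x K)"
    using simple_extension_subring_incl[OF subfieldE(1)] generate_field.incl[of _ "insert x K" R]
    by blast
qed

lemma (in field) generate_field_exp_base_independent:
  assumes K: "subfield K R" and x: "x \<in> carrier R"
    and le: "le_hdim R K r (generate_field R (insert x K))"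
  shows "independent K (exp_base x r)"
proof (cases "(transcendental over K) x")
  case True thus ?thesis using transcendental_exp_base_independent[OF K x] by blast
next
  case False
  hence alg: "(algebraic over K) x" by (simp add: over_def)
  define d where "d = degree (Irr K x)"
  have "r \<le> d"
    using le simple_extension_dim[OF K x alg] finite_dimension_simple_extension[OF K x] alg
    unfolding le_hdim_def generate_field_eq_simple_extension[OF K x alg] d_def
    by (simp add: over_def)
  hence "exp_base x d = take (d - r) (exp_base x d) @ exp_base x r"
    using drop_exp_base[of "d - r" x d] by (metis append_take_drop_id diff_diff_cancel)
  thus ?thesis
    using independent_split(1)[OF K] exp_base_independent[OF K x alg] unfolding d_def by metis
qed

lemma (in field) hsubspace_dim_Span_exp_base:
  assumes K: "subfield K R" and x: "x \<in> carrier R"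
    and M: "M = generate_field R (insert x K)" and "le_hdim R K n M"
  shows "hsubspace_dim R K M n (Span K (exp_base x n))"
proof -
  have xK: "insert x K \<subseteq> M" and "subfield M R"
    using M generate_field.incl[of _ "insert x K" R] generate_field_is_subfield subfieldE(3)[OF K] x
    by auto
  hence "subalgebra K M R" and "set (exp_base x n) \<subseteq> M"
    using subring_is_subalgebra[OF subfieldE(1)] exp_base_subset_subring[OF subfieldE(1)] by auto
  moreover have "dimension n K (Span K (exp_base x n))"
    using dimension_independent[OF generate_field_exp_base_independent[OF K x]] assms(4) M
    by (simp add: exp_base_def)
  ultimately show ?thesis
    unfolding hsubspace_dim_def
    using Span_is_subalgebra[OF K exp_base_closed[OF x]] subalgebra_Span_incl[OF K] by blast
qed

lemma (in domain) Span_exp_base_mult: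
  assumes K: "subfield K R" and x: "x \<in> carrier R" and "0 < m" "0 < n"
    and a: "a \<in> Span K (exp_base x m)" and b: "b \<in> Span K (exp_base x n)"
  shows "a \<otimes> b \<in> Span K (exp_base x (m + n - 1))"
proof -
  have sr: "subring K R" using subfieldE(1)[OF K] .
  interpret UP: ring "K[X]" using univ_poly_is_ring[OF sr] .
  obtain p where p: "p \<in> carrier (K[X])" "length p \<le> m" "a = eval p x"
    using a Span_eq_eval_img[OF K x] by auto
  obtain q where q: "q \<in> carrier (K[X])" "length q \<le> n" "b = eval q x"
    using b Span_eq_eval_img[OF K x] by auto
  have "set p \<subseteq> carrier R" "set q \<subseteq> carrier R"
    using p(1) q(1) polynomial_in_carrier[OF sr] unfolding univ_poly_carrier[symmetric] by auto
  hence "a \<otimes> b = eval (poly_mult p q) x"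
    using eval_poly_mult x p q by simp
  moreover have "poly_mult p q \<in> carrier (K[X])"
    using UP.m_closed[OF p(1) q(1)] univ_poly_mult[of R K] by simp
  moreover have "degree (poly_mult p q) = (if p = [] \<or> q = [] then 0 else degree p + degree q)"
    using poly_mult_degree_eq[OF sr] p(1) q(1) unfolding univ_poly_carrier[symmetric] by blast
  hence "length (poly_mult p q) \<le> m + n - 1"
    using p(2) q(2) assms(3,4) by (cases "p = [] \<or> q = []") auto
  ultimately show ?thesis
    using Span_eq_eval_img[OF K x] by auto
qed

lemma (in ring) exp_base_subset_set_mult:
  assumes K: "subfield K R" and x: "x \<in> carrier R" and "0 < m" "0 < n"
  shows "set (exp_base x (m + n - 1)) \<subseteq> Span K (exp_base x m) <#> Span K (exp_base x n)"
proof
  fix u assume "u \<in> set (exp_base x (m + n - 1))"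
  then obtain k where k: "k < m + n - 1" "u = x [^] k" unfolding exp_base_def by auto
  define i where "i = min k (m - 1)"
  have "i < m" "k - i < n" using k(1) assms(3,4) unfolding i_def by auto
  hence "x [^] i \<in> set (exp_base x m)" "x [^] (k - i) \<in> set (exp_base x n)"
    unfolding exp_base_def by auto
  hence "x [^] i \<in> Span K (exp_base x m)" "x [^] (k - i) \<in> Span K (exp_base x n)"
    using Span_base_incl[OF K exp_base_closed[OF x]] by blast+
  moreover have "u = x [^] i \<otimes> x [^] (k - i)"
    using k(2) nat_pow_mult[OF x] unfolding i_def by simp
  ultimately show "u \<in> Span K (exp_base x m) <#> Span K (exp_base x n)"
    unfolding set_mult_def by blast
qed

corollary (in domain) hspan_set_mult_Span_exp_base:
  assumes K: "subfield K R" and x: "x \<in> carrier R" and "0 < m" "0 < n"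
  shows "hspan R K (Span K (exp_base x m) <#> Span K (exp_base x n))
    = Span K (exp_base x (m + n - 1))"
proof (rule hspan_eq_Span[OF K exp_base_closed[OF x] exp_base_subset_set_mult[OF assms]])
  show "Span K (exp_base x m) <#> Span K (exp_base x n) \<subseteq> Span K (exp_base x (m + n - 1))"
    using Span_exp_base_mult[OF assms] unfolding set_mult_def by blast
qed

theorem lemma4p1:
  fixes L :: "('a, 'b) ring_scheme" and H :: "'a set" and \<alpha> :: 'a and M :: "'a set"
    and r s :: nat
  assumes "field L" and "subfield H L" and "\<alpha> \<in> carrier L"
    and "M = generate_field L (insert \<alpha> H)"
    and "0 < r" and "0 < s" and "le_hdim L H r M" and "le_hdim L H s M"
  shows "mu L H M r s \<le> r + s - 1"
proof -
  interpret L: field L by fact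
  define A where "A = L.Span H (L.exp_base \<alpha> r)"
  define B where "B = L.Span H (L.exp_base \<alpha> s)"
  have "hsubspace_dim L H M r A" "hsubspace_dim L H M s B"
    using L.hsubspace_dim_Span_exp_base[OF assms(2-4)] assms(7,8) unfolding A_def B_def by auto
  hence "mu L H M r s \<le> L.dim H (hspan L H (A <#>\<^bsub>L\<^esub> B))"
    unfolding mu_def by (intro cInf_lower) blast+
  also have "\<dots> = L.dim H (L.Span H (L.exp_base \<alpha> (r + s - 1)))"
    using L.hspan_set_mult_Span_exp_base[OF assms(2,3,5,6)] unfolding A_def B_def by simp
  also have "\<dots> \<le> r + s - 1"
    using L.dim_Span_le_length[OF assms(2) L.exp_base_closed[OF assms(3)]]
    by (simp add: L.exp_base_def over_def)
  finally show ?thesis .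
qed

end
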